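(* Suppose Assumption 1 holds and let $0<\delta<1$. Let $J\subseteq\{1,\dots,q\}$ with $|J|\le q^*$ and $J_0\setminus J\neq\emptyset$, and let $v=\sum_{j\in J_0}v_j$ with $v_j\in V_j$ for $j\in J_0$. On the event $\mathcal E_{\delta,J\cup J_0}$, $$\|\hat\Pi_{J_0}v\|_n^2-\|\hat\Pi_Jv\|_n^2=\|v-\hat\Pi_Jv\|_n^2\ge\frac{1-\delta}{1+\delta}(1-\rho_{q^*}^2)\Big\|\sum_{j\in J_0\setminus J}v_j\Big\|_n^2.$$
   Context: Let $q\ge1$ and let $(Y,X)$ be a pair of random variables with $X=(X_1,\dots,X_q)^T$, each $X_j$ real-valued, and $Y=\sum_{j=1}^q f_j(X_j)+\epsilon$, where $f_j\in L^2(\mathbb P^{X_j})$, $\mathbb E[f_j(X_j)]=0$ for $j=1,\dots,q-1$, and $\epsilon$ is a centered Gaussian variable with variance $\sigma^2$, independent of $X$. The space $L^2(\mathbb P^X)$ carries the inner product $\langle g,h\rangle=\mathbb E[g(X)h(X)]$ and norm $\|g\|=\langle g,g\rangle^{1/2}$. Let $H_q=L^2(\mathbb P^{X_q})$ and $H_j=\{h\in L^2(\mathbb P^{X_j}):\mathbb E[h(X_j)]=0\}$ for $j<q$, viewed as subspaces of $L^2(\mathbb P^X)$ via $x\mapsto h(x_j)$; for $J\subseteq\{1,\dots,q\}$ let $H_J=\sum_{j\in J}H_j$ (with $H_\emptyset=\{0\}$). Let $J_0=\{j:\|f_j\|>0\}$, $s=|J_0|$, and let $q^*$ be an integer with $s\le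 q^*$. Let $\rho_{q^*}$ be the supremum of $\langle h_1,h_2\rangle/(\|h_1\|\|h_2\|)$ over all nonzero $h_1\in H_{J_1}$, $h_2\in H_{J_2}$ and all $J_1,J_2\subseteq\{1,\dots,q\}$ with $J_1\cap J_2=\emptyset$ and $|J_1|,|J_2|\le q^*$. Assumption 1 is the condition $\rho_{q^*}<1$. For each $j$, $V_j\subseteq H_j$ is a finite-dimensional linear subspace and $V_J=\sum_{j\in J}V_j$. $X^1,\dots,X^n$ are independent copies of $X$. The empirical norm is $\|h\|_n^2=\frac1n\sum_{i=1}^nh(X^i)^2$ for functions and $\|u\|_n^2=\frac1n\|u\|_2^2$ for $u\in\mathbb R^n$. $\hat\Pi_J$ is the orthogonal projection of $\mathbb R^n$ onto $\{(g(X^1),\dots,g(X^n))^T:g\in V_J\}$, and for a function $h$ we write $\hat\Pi_Jh=\hat\Pi_J(h(X^1),\dots,h(X^n))^T$. For $0<\delta<1$ and $J\subseteq\{1,\dots,q\}$, $\mathcal E_{\delta,J}$ is the event that $(1-\delta)\|g\|^2\le\|g\|_n^2\le(1+\delta)\|g\|^2$ for all $g\in V_J$. *)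

theory Defs
  imports "HOL-Probability.Probability"
begin

text \<open>Random vector X = (X_1,...,X_q), coordinates indexed by 1..q; a function on
  the sample space of X is a map (nat \<Rightarrow> real) \<Rightarrow> real.\<close>

definition Xvec :: "(nat \<Rightarrow> 'a \<Rightarrow> real) \<Rightarrow> 'a \<Rightarrow> (nat \<Rightarrow> real)" where
  "Xvec X \<omega> = (\<lambda>j. X j \<omega>)"

definition pinner :: "'a measure \<Rightarrow> (nat \<Rightarrow> 'a \<Rightarrow> real) \<Rightarrow> ((nat \<Rightarrow> real) \<Rightarrow> real)
    \<Rightarrow> ((nat \<Rightarrow> real) \<Rightarrow> real) \<Rightarrow> real" where
  "pinner M X g h = (\<integral>\<omega>. g (Xvec X \<omega>) * h (Xvec X \<omega>) \<partial>M)"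

definition pnorm :: "'a measure \<Rightarrow> (nat \<Rightarrow> 'a \<Rightarrow> real) \<Rightarrow> ((nat \<Rightarrow> real) \<Rightarrow> real) \<Rightarrow> real" where
  "pnorm M X g = sqrt (pinner M X g g)"

definition Hsp :: "'a measure \<Rightarrow> (nat \<Rightarrow> 'a \<Rightarrow> real) \<Rightarrow> nat \<Rightarrow> nat
    \<Rightarrow> ((nat \<Rightarrow> real) \<Rightarrow> real) set" where
  "Hsp M X q j = {g. \<exists>h. h \<in> borel_measurable borel
      \<and> integrable M (\<lambda>\<omega>. (h (X j \<omega>))\<^sup>2)
      \<and> (j < q \<longrightarrow> (\<integral>\<omega>. h (X j \<omega>) \<partial>M) = 0)
      \<and> g = (\<lambda>x. h (x j))}"

definition sumsp :: "(nat \<Rightarrow> ((nat \<Rightarrow> real) \<Rightarrow> real) set) \<Rightarrow> nat set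
    \<Rightarrow> ((nat \<Rightarrow> real) \<Rightarrow> real) set" where
  "sumsp S J = {(\<lambda>x. \<Sum>j\<in>J. g j x) | g. \<forall>j\<in>J. g j \<in> S j}"

definition rho :: "'a measure \<Rightarrow> (nat \<Rightarrow> 'a \<Rightarrow> real) \<Rightarrow> nat \<Rightarrow> nat \<Rightarrow> real" where
  "rho M X q qstar = Sup {pinner M X h1 h2 / (pnorm M X h1 * pnorm M X h2) | h1 h2 J1 J2.
      J1 \<subseteq> {1..q} \<and> J2 \<subseteq> {1..q} \<and> J1 \<inter> J2 = {} \<and> card J1 \<le> qstar \<and> card J2 \<le> qstar
      \<and> h1 \<in> sumsp (Hsp M X q) J1 \<and> h2 \<in> sumsp (Hsp M X q) J2
      \<and> pnorm M X h1 > 0 \<and> pnorm M X h2 > 0}"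

definition fin_dim_subspace :: "((nat \<Rightarrow> real) \<Rightarrow> real) set \<Rightarrow> bool" where
  "fin_dim_subspace S \<longleftrightarrow> (\<exists>B. finite B \<and> S = {(\<lambda>x. \<Sum>b\<in>B. c b * b x) | c. True})"

text \<open>Sample X^i, i ranging over the finite type 'n (n = CARD('n)).\<close>
definition evalv :: "('n::finite \<Rightarrow> (nat \<Rightarrow> real)) \<Rightarrow> ((nat \<Rightarrow> real) \<Rightarrow> real) \<Rightarrow> real ^ 'n" where
  "evalv xs g = (\<chi> i. g (xs i))"

definition emp_norm2_vec :: "real ^ 'n::finite \<Rightarrow> real" where
  "emp_norm2_vec u = (norm u)\<^sup>2 / real CARD('n)"

definition emp_norm2 :: "('n::finite \<Rightarrow> (nat \<Rightarrow> real)) \<Rightarrow> ((nat \<Rightarrow> real) \<Rightarrow> real) \<Rightarrow> real" where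
  "emp_norm2 xs g = (\<Sum>i\<in>UNIV. (g (xs i))\<^sup>2) / real CARD('n)"

definition orth_proj :: "(real ^ 'n::finite) set \<Rightarrow> real ^ 'n \<Rightarrow> real ^ 'n" where
  "orth_proj W u = (THE p. p \<in> W \<and> (\<forall>w\<in>W. (u - p) \<bullet> w = 0))"

definition PiJ :: "(nat \<Rightarrow> ((nat \<Rightarrow> real) \<Rightarrow> real) set) \<Rightarrow> ('n::finite \<Rightarrow> (nat \<Rightarrow> real))
    \<Rightarrow> nat set \<Rightarrow> real ^ 'n \<Rightarrow> real ^ 'n" where
  "PiJ V xs J = orth_proj (evalv xs ` sumsp V J)"

definition event_E :: "'a measure \<Rightarrow> (nat \<Rightarrow> 'a \<Rightarrow> real) \<Rightarrow> (nat \<Rightarrow> ((nat \<Rightarrow> real) \<Rightarrow> real) set)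
    \<Rightarrow> ('n::finite \<Rightarrow> (nat \<Rightarrow> real)) \<Rightarrow> real \<Rightarrow> nat set \<Rightarrow> bool" where
  "event_E M X V xs \<delta> J \<longleftrightarrow> (\<forall>g \<in> sumsp V J.
      (1 - \<delta>) * (pnorm M X g)\<^sup>2 \<le> emp_norm2 xs g \<and> emp_norm2 xs g \<le> (1 + \<delta>) * (pnorm M X g)\<^sup>2)"

end

theory Submission imports Defs begin

(*
  Since v lies in V_{J0}, its projection onto V_{J0} is v itself, and the
  claimed identity is Pythagoras for the projection onto V_J.  For the inequality, write
  the residual v - Pi_J v as the evaluation of d = h1 - h2 with
  h1 = sum_{j in J0 - J} v_j in H_{J0 - J} and h2 in H_J.  Since J0 - J and J are disjoint
  and small, the correlation of h1 and h2 is at most rho, and expanding ||h1 - h2||^2 gives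
  (1 - rho^2) ||h1||^2 <= ||h1 - h2||^2; the event E_{delta, J u J0} converts both population
  norms into empirical ones, which costs the factor (1 - delta)/(1 + delta).
*)

section \<open>Linear structure of the approximation spaces\<close>

lemma fds_lincomb:
  assumes "fin_dim_subspace S" "a \<in> S" "b \<in> S"
  shows "(\<lambda>x. s * a x + t * b x) \<in> S"
proof -
  obtain B where B: "S = {(\<lambda>x. \<Sum>b\<in>B. c b * b x) | c. True}"
    using assms(1) unfolding fin_dim_subspace_def by blast
  obtain ca cb where "a = (\<lambda>x. \<Sum>b\<in>B. ca b * b x)" "b = (\<lambda>x. \<Sum>b\<in>B. cb b * b x)"
    using assms(2,3) B by auto
  then have "(\<lambda>x. s * a x + t * b x) = (\<lambda>x. \<Sum>b\<in>B. (s * ca b + t * cb b) * b x)"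
    by (simp add: fun_eq_iff sum_distrib_left sum.distrib[symmetric] algebra_simps)
  then show ?thesis using B by auto
qed

lemma fds_zero: "fin_dim_subspace S \<Longrightarrow> (\<lambda>x. 0) \<in> S"
  unfolding fin_dim_subspace_def by (auto intro!: exI[of _ "\<lambda>b. 0"])

lemma sumsp_lincomb:
  assumes "\<And>j. j \<in> K \<Longrightarrow> fin_dim_subspace (S j)" "g \<in> sumsp S K" "h \<in> sumsp S K"
  shows "(\<lambda>x. s * g x + t * h x) \<in> sumsp S K"
proof -
  obtain g' where g': "g = (\<lambda>x. \<Sum>j\<in>K. g' j x)" "\<forall>j\<in>K. g' j \<in> S j"
    using assms(2) unfolding sumsp_def by blast
  obtain h' where h': "h = (\<lambda>x. \<Sum>j\<in>K. h' j x)" "\<forall>j\<in>K. h' j \<in> S j"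
    using assms(3) unfolding sumsp_def by blast
  have "\<forall>j\<in>K. (\<lambda>y. s * g' j y + t * h' j y) \<in> S j"
    using g' h' assms(1) fds_lincomb by blast
  then show ?thesis unfolding sumsp_def mem_Collect_eq
    by (intro exI[of _ "\<lambda>j y. s * g' j y + t * h' j y"])
      (simp add: g' h' sum.distrib sum_distrib_left)
qed

lemma sumsp_diff:
  "(\<And>j. j \<in> K \<Longrightarrow> fin_dim_subspace (S j)) \<Longrightarrow> g \<in> sumsp S K \<Longrightarrow> h \<in> sumsp S K
    \<Longrightarrow> (\<lambda>x. g x - h x) \<in> sumsp S K"
  using sumsp_lincomb[of K S g h 1 "-1"] by simp

lemma sumsp_zero: "(\<And>j. j \<in> K \<Longrightarrow> fin_dim_subspace (S j)) \<Longrightarrow> (\<lambda>x. 0) \<in> sumsp S K"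
  unfolding sumsp_def using fds_zero by (auto intro!: exI[of _ "\<lambda>j x. 0"])

lemma sumsp_of_components: "(\<And>j. j \<in> K \<Longrightarrow> g j \<in> S j) \<Longrightarrow> (\<lambda>x. \<Sum>j\<in>K. g j x) \<in> sumsp S K"
  unfolding sumsp_def by blast

lemma sumsp_mono:
  assumes "K \<subseteq> L" "finite L" "\<And>j. j \<in> L \<Longrightarrow> fin_dim_subspace (S j)" "g \<in> sumsp S K"
  shows "g \<in> sumsp S L"
proof -
  obtain g' where g': "g = (\<lambda>x. \<Sum>j\<in>K. g' j x)" "\<forall>j\<in>K. g' j \<in> S j"
    using assms(4) unfolding sumsp_def by blast
  define g'' where "g'' = (\<lambda>j. if j \<in> K then g' j else (\<lambda>x. 0))"
  have "(\<Sum>j\<in>L. g'' j x) = (\<Sum>j\<in>K. g'' j x)" for x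
    by (rule sum.mono_neutral_right) (use assms in \<open>auto simp: g''_def\<close>)
  then have "g = (\<lambda>x. \<Sum>j\<in>L. g'' j x)" by (simp add: g' g''_def)
  moreover have "g'' j \<in> S j" if "j \<in> L" for j
    using g' assms(3)[OF that] fds_zero by (auto simp: g''_def)
  ultimately show ?thesis unfolding sumsp_def by blast
qed

lemma sumsp_subset: "(\<And>j. j \<in> K \<Longrightarrow> S j \<subseteq> T j) \<Longrightarrow> g \<in> sumsp S K \<Longrightarrow> g \<in> sumsp T K"
  unfolding sumsp_def by blast

lemma subspace_evalv_sumsp:
  assumes "\<And>j. j \<in> K \<Longrightarrow> fin_dim_subspace (S j)"
  shows "subspace (evalv xs ` sumsp S K)"
  unfolding subspace_def
proof (intro conjI ballI allI)
  show "0 \<in> evalv xs ` sumsp S K"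
    by (rule image_eqI[OF _ sumsp_zero[OF assms]]) (simp add: evalv_def vec_eq_iff)
next
  fix u w assume "u \<in> evalv xs ` sumsp S K" "w \<in> evalv xs ` sumsp S K"
  then obtain g h where gh: "g \<in> sumsp S K" "h \<in> sumsp S K" "u = evalv xs g" "w = evalv xs h"
    by auto
  show "u + w \<in> evalv xs ` sumsp S K"
    by (rule image_eqI[OF _ sumsp_lincomb[OF assms gh(1,2), where s = 1 and t = 1]])
      (simp add: gh evalv_def vec_eq_iff)
next
  fix c u assume "u \<in> evalv xs ` sumsp S K"
  then obtain g where g: "g \<in> sumsp S K" "u = evalv xs g" by auto
  show "c *\<^sub>R u \<in> evalv xs ` sumsp S K"
    by (rule image_eqI[OF _ sumsp_lincomb[OF assms g(1) g(1), where s = c and t = 0]])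
      (simp add: g evalv_def vec_eq_iff)
qed

lemma sumsp_residual_split:
  assumes "finite J" "finite J0" "\<And>j. j \<in> J \<Longrightarrow> fin_dim_subspace (V j)"
    and "\<And>j. j \<in> J0 \<Longrightarrow> vv j \<in> V j" "g \<in> sumsp V J"
  obtains h where "h \<in> sumsp V J"
    "(\<lambda>x. (\<Sum>j\<in>J0. vv j x) - g x) = (\<lambda>x. (\<Sum>j\<in>J0 - J. vv j x) - h x)"
proof
  have "(\<lambda>x. \<Sum>j\<in>J0 \<inter> J. vv j x) \<in> sumsp V (J0 \<inter> J)"
    by (rule sumsp_of_components) (simp add: assms(4))
  then have "(\<lambda>x. \<Sum>j\<in>J0 \<inter> J. vv j x) \<in> sumsp V J"
    by (meson Int_lower2 assms(1,3) sumsp_mono)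
  then show "(\<lambda>x. g x - (\<Sum>j\<in>J0 \<inter> J. vv j x)) \<in> sumsp V J"
    using sumsp_diff[OF assms(3) assms(5)] by blast
  have "(\<Sum>j\<in>J0. vv j x) = (\<Sum>j\<in>J0 \<inter> J. vv j x) + (\<Sum>j\<in>J0 - J. vv j x)" for x
    by (rule sum.Int_Diff[OF assms(2)])
  then show "(\<lambda>x. (\<Sum>j\<in>J0. vv j x) - g x)
      = (\<lambda>x. (\<Sum>j\<in>J0 - J. vv j x) - (g x - (\<Sum>j\<in>J0 \<inter> J. vv j x)))"
    by (simp add: fun_eq_iff)
qed

section \<open>Orthogonal projections in R^n\<close>

lemma orth_proj_eqI:
  assumes W: "subspace W" and p: "p \<in> W" "\<forall>w\<in>W. (u - p) \<bullet> w = 0"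
  shows "orth_proj W u = p"
  unfolding orth_proj_def
proof (rule the_equality)
  show "p \<in> W \<and> (\<forall>w\<in>W. (u - p) \<bullet> w = 0)" using p by blast
next
  fix p' assume p': "p' \<in> W \<and> (\<forall>w\<in>W. (u - p') \<bullet> w = 0)"
  then have "p' - p \<in> W" using p(1) W subspace_diff by blast
  then have "(u - p) \<bullet> (p' - p) = 0" "(u - p') \<bullet> (p' - p) = 0" using p p' by blast+
  then have "(p' - p) \<bullet> (p' - p) = 0" by (simp add: inner_diff_left)
  then show "p' = p" by simp
qed

lemma orth_proj_props:
  assumes "subspace W"
  shows "orth_proj W u \<in> W" "\<forall>w\<in>W. (u - orth_proj W u) \<bullet> w = 0"
proof -
  obtain y z where yz: "y \<in> span W" "\<And>w. w \<in> span W \<Longrightarrow> orthogonal z w" "u = y + z"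
    by (rule orthogonal_subspace_decomp_exists[of W u]) auto
  have y: "y \<in> W" "\<forall>w\<in>W. (u - y) \<bullet> w = 0"
    using yz span_base[of _ W] assms by (metis span_eq_iff, auto simp: orthogonal_def)
  then have "orth_proj W u = y" by (intro orth_proj_eqI[OF assms])
  with y show "orth_proj W u \<in> W" "\<forall>w\<in>W. (u - orth_proj W u) \<bullet> w = 0" by simp_all
qed

lemma orth_proj_id: "subspace W \<Longrightarrow> u \<in> W \<Longrightarrow> orth_proj W u = u"
  by (rule orth_proj_eqI) simp_all

lemma orth_proj_pythagoras:
  assumes "subspace W"
  shows "(norm (u - orth_proj W u))\<^sup>2 = (norm u)\<^sup>2 - (norm (orth_proj W u))\<^sup>2"
proof -
  define p where "p = orth_proj W u"
  have "(u - p) \<bullet> p = 0" using orth_proj_props[OF assms] by (simp add: p_def)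
  then show ?thesis unfolding p_def[symmetric] power2_norm_eq_inner
    by (simp add: inner_diff_left inner_diff_right inner_commute)
qed

lemma emp_norm2_vec_evalv: "emp_norm2_vec (evalv xs g) = emp_norm2 xs g"
  unfolding emp_norm2_vec_def emp_norm2_def power2_norm_eq_inner inner_vec_def evalv_def
  by (simp add: power2_eq_square)

lemma emp_norm2_nonneg: "0 \<le> emp_norm2 xs g"
  unfolding emp_norm2_def by (simp add: sum_nonneg)

section \<open>Square-integrable functions of X\<close>

definition L2f :: "'a measure \<Rightarrow> (nat \<Rightarrow> 'a \<Rightarrow> real) \<Rightarrow> ((nat \<Rightarrow> real) \<Rightarrow> real) \<Rightarrow> bool" where
  "L2f M X g \<longleftrightarrow> (\<lambda>\<omega>. g (Xvec X \<omega>)) \<in> borel_measurable M \<and> integrable M (\<lambda>\<omega>. (g (Xvec X \<omega>))\<^sup>2)"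

text \<open>Products of square-integrable variables are integrable, since |ab| \<le> a^2 + b^2.\<close>
lemma L2f_prod:
  assumes "L2f M X g" "L2f M X h"
  shows "integrable M (\<lambda>\<omega>. g (Xvec X \<omega>) * h (Xvec X \<omega>))"
proof (rule Bochner_Integration.integrable_bound)
  show "integrable M (\<lambda>\<omega>. (g (Xvec X \<omega>))\<^sup>2 + (h (Xvec X \<omega>))\<^sup>2)"
    using assms unfolding L2f_def by auto
  show "(\<lambda>\<omega>. g (Xvec X \<omega>) * h (Xvec X \<omega>)) \<in> borel_measurable M"
    using assms unfolding L2f_def by auto
  have "\<bar>a * b\<bar> \<le> a\<^sup>2 + b\<^sup>2" for a b :: real
  proof -
    have "2 * (\<bar>a\<bar> * \<bar>b\<bar>) \<le> a\<^sup>2 + b\<^sup>2"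
      using sum_squares_bound[of "\<bar>a\<bar>" "\<bar>b\<bar>"] by (simp add: mult.assoc)
    moreover have "0 \<le> \<bar>a\<bar> * \<bar>b\<bar>" by simp
    ultimately show ?thesis unfolding abs_mult by linarith
  qed
  then show "AE \<omega> in M. norm (g (Xvec X \<omega>) * h (Xvec X \<omega>))
      \<le> norm ((g (Xvec X \<omega>))\<^sup>2 + (h (Xvec X \<omega>))\<^sup>2)"
    by (simp del: abs_mult)
qed

lemma L2f_lincomb:
  assumes "L2f M X g" "L2f M X h"
  shows "L2f M X (\<lambda>x. g x + t * h x)"
proof -
  have "(\<lambda>\<omega>. (g (Xvec X \<omega>) + t * h (Xvec X \<omega>))\<^sup>2) = (\<lambda>\<omega>. (g (Xvec X \<omega>))\<^sup>2
      + 2 * t * (g (Xvec X \<omega>) * h (Xvec X \<omega>)) + t\<^sup>2 * (h (Xvec X \<omega>))\<^sup>2)"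
    by (simp add: fun_eq_iff power2_eq_square algebra_simps)
  then show ?thesis using assms L2f_prod[OF assms] unfolding L2f_def by auto
qed

lemma L2f_sumsp_Hsp:
  assumes "K \<subseteq> {1..q}" "\<And>j. j \<in> {1..q} \<Longrightarrow> X j \<in> borel_measurable M"
    and "g \<in> sumsp (Hsp M X q) K"
  shows "L2f M X g"
proof -
  obtain g' where g': "g = (\<lambda>x. \<Sum>j\<in>K. g' j x)" "\<And>j. j \<in> K \<Longrightarrow> g' j \<in> Hsp M X q j"
    using assms(3) unfolding sumsp_def by blast
  have component: "L2f M X (g' j)" if jK: "j \<in> K" for j
  proof -
    obtain h where h: "h \<in> borel_measurable borel" "integrable M (\<lambda>\<omega>. (h (X j \<omega>))\<^sup>2)"
      "g' j = (\<lambda>x. h (x j))"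
      using g'(2)[OF jK] unfolding Hsp_def by blast
    have "(\<lambda>\<omega>. h (X j \<omega>)) \<in> borel_measurable M"
      using jK assms(1,2) h(1) by (blast intro: measurable_compose)
    then show ?thesis using h unfolding L2f_def Xvec_def by simp
  qed
  have "finite K" using assms(1) finite_subset by blast
  then show ?thesis unfolding g'(1) using component
  proof (induction K rule: finite_induct)
    case empty then show ?case by (simp add: L2f_def)
  next
    case (insert k K)
    then show ?case using L2f_lincomb[of M X "g' k" "\<lambda>x. \<Sum>j\<in>K. g' j x" 1] by simp
  qed
qed

lemma pinner_nonneg: "0 \<le> pinner M X g g"
  unfolding pinner_def by (rule Bochner_Integration.integral_nonneg) simp

lemma pnorm_sq: "(pnorm M X g)\<^sup>2 = pinner M X g g"
  unfolding pnorm_def using pinner_nonneg by simp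

lemma pinner_expand:
  assumes "L2f M X g" "L2f M X h"
  shows "pinner M X (\<lambda>x. g x - t * h x) (\<lambda>x. g x - t * h x)
       = pinner M X g g - 2 * t * pinner M X g h + t\<^sup>2 * pinner M X h h"
proof -
  have "pinner M X (\<lambda>x. g x - t * h x) (\<lambda>x. g x - t * h x)
     = (\<integral>\<omega>. (g (Xvec X \<omega>) * g (Xvec X \<omega>) + t\<^sup>2 * (h (Xvec X \<omega>) * h (Xvec X \<omega>)))
             - (2 * t) * (g (Xvec X \<omega>) * h (Xvec X \<omega>)) \<partial>M)"
    unfolding pinner_def
    by (rule Bochner_Integration.integral_cong) (auto simp: power2_eq_square algebra_simps)
  also have "\<dots> = pinner M X g g - 2 * t * pinner M X g h + t\<^sup>2 * pinner M X h h"
    unfolding pinner_def using L2f_prod[OF assms(1,1)] L2f_prod[OF assms] L2f_prod[OF assms(2,2)]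
    by simp
  finally show ?thesis .
qed

text \<open>Cauchy-Schwarz, from nonnegativity of the quadratic t \<mapsto> ||g - t h||^2.\<close>
lemma cauchy_schwarz_pinner:
  assumes "L2f M X g" "L2f M X h"
  shows "(pinner M X g h)\<^sup>2 \<le> pinner M X g g * pinner M X h h"
proof -
  define A B c where "A = pinner M X g g" "B = pinner M X h h" "c = pinner M X g h"
  have quadratic: "0 \<le> A - 2 * t * c + t\<^sup>2 * B" for t
    using pinner_expand[OF assms, of t] pinner_nonneg[of M X "\<lambda>x. g x - t * h x"]
    by (simp add: A_B_c_def)
  show ?thesis
  proof (cases "B = 0")
    case True
    have "c = 0"
    proof (rule ccontr)
      assume "c \<noteq> 0"
      then have "A - 2 * ((A + 1) / (2 * c)) * c = -1" by (simp add: field_simps)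
      then show False using quadratic[of "(A + 1) / (2 * c)"] True by simp
    qed
    then show ?thesis using True by (simp add: A_B_c_def[symmetric])
  next
    case False
    then have "B > 0" using pinner_nonneg[of M X h] by (simp add: A_B_c_def)
    have "0 \<le> A - 2 * (c / B) * c + (c / B)\<^sup>2 * B" by (rule quadratic)
    also have "\<dots> = A - c\<^sup>2 / B" using \<open>B > 0\<close> by (simp add: field_simps power2_eq_square)
    finally have "c\<^sup>2 \<le> A * B" using \<open>B > 0\<close> by (simp add: divide_le_eq)
    then show ?thesis by (simp add: A_B_c_def)
  qed
qed

lemma pinner_le_pnorm:
  assumes "L2f M X g" "L2f M X h"
  shows "pinner M X g h \<le> pnorm M X g * pnorm M X h"
proof -
  have "pinner M X g h \<le> sqrt ((pinner M X g h)\<^sup>2)" by simp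
  also have "\<dots> \<le> sqrt (pinner M X g g * pinner M X h h)"
    using cauchy_schwarz_pinner[OF assms] by (rule real_sqrt_le_mono)
  also have "\<dots> = pnorm M X g * pnorm M X h" unfolding pnorm_def by (simp add: real_sqrt_mult)
  finally show ?thesis .
qed

lemma correlation_gap:
  assumes "L2f M X g" "L2f M X h"
    and r: "pnorm M X g > 0 \<Longrightarrow> pnorm M X h > 0
      \<Longrightarrow> pinner M X g h / (pnorm M X g * pnorm M X h) \<le> r"
  shows "(1 - r\<^sup>2) * (pnorm M X g)\<^sup>2 \<le> (pnorm M X (\<lambda>x. g x - h x))\<^sup>2"
proof -
  define a b c where "a = pnorm M X g" "b = pnorm M X h" "c = pinner M X g h"
  have expand: "(pnorm M X (\<lambda>x. g x - h x))\<^sup>2 = a\<^sup>2 - 2 * c + b\<^sup>2"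
    using pinner_expand[OF assms(1,2), of 1] by (simp add: a_b_c_def pnorm_sq)
  have "a \<ge> 0" "b \<ge> 0" unfolding a_b_c_def pnorm_def by (simp_all add: pinner_nonneg)
  have cs: "c\<^sup>2 \<le> a\<^sup>2 * b\<^sup>2"
    using cauchy_schwarz_pinner[OF assms(1,2)] by (simp add: a_b_c_def pnorm_sq)
  consider "a = 0" | "b = 0" | "a > 0" "b > 0" using \<open>a \<ge> 0\<close> \<open>b \<ge> 0\<close> by fastforce
  then show ?thesis
  proof cases
    case 1
    then show ?thesis unfolding a_b_c_def[symmetric] by simp
  next
    case 2
    then have "c = 0" using cs by simp
    then show ?thesis unfolding expand using 2 by (simp add: a_b_c_def[symmetric] algebra_simps)
  next
    case 3
    then have "c \<le> r * (a * b)" using r by (simp add: a_b_c_def divide_le_eq)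
    moreover have "0 \<le> (b - r * a)\<^sup>2" by simp
    ultimately show ?thesis unfolding expand a_b_c_def[symmetric]
      by (simp add: power2_eq_square algebra_simps)
  qed
qed

section \<open>The correlation bound rho\<close>

text \<open>Correlations between H_{J1} and H_{J2}, for disjoint admissible J1, J2, are bounded
  by rho; the defining set is bounded above by 1 thanks to Cauchy-Schwarz.\<close>
lemma correlation_le_rho:
  assumes Xmeas: "\<And>j. j \<in> {1..q} \<Longrightarrow> X j \<in> borel_measurable M"
    and J12: "J1 \<subseteq> {1..q}" "J2 \<subseteq> {1..q}" "J1 \<inter> J2 = {}" "card J1 \<le> qstar" "card J2 \<le> qstar"
    and h: "h1 \<in> sumsp (Hsp M X q) J1" "h2 \<in> sumsp (Hsp M X q) J2"
    and pos: "pnorm M X h1 > 0" "pnorm M X h2 > 0"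
  shows "pinner M X h1 h2 / (pnorm M X h1 * pnorm M X h2) \<le> rho M X q qstar"
  unfolding rho_def
proof (rule cSup_upper)
  show "pinner M X h1 h2 / (pnorm M X h1 * pnorm M X h2) \<in> {pinner M X h1 h2 / (pnorm M X h1 * pnorm M X h2) | h1 h2 J1 J2.
      J1 \<subseteq> {1..q} \<and> J2 \<subseteq> {1..q} \<and> J1 \<inter> J2 = {} \<and> card J1 \<le> qstar \<and> card J2 \<le> qstar
      \<and> h1 \<in> sumsp (Hsp M X q) J1 \<and> h2 \<in> sumsp (Hsp M X q) J2
      \<and> pnorm M X h1 > 0 \<and> pnorm M X h2 > 0}"
    using J12 h pos by blast
  show "bdd_above {pinner M X h1 h2 / (pnorm M X h1 * pnorm M X h2) | h1 h2 J1 J2.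
      J1 \<subseteq> {1..q} \<and> J2 \<subseteq> {1..q} \<and> J1 \<inter> J2 = {} \<and> card J1 \<le> qstar \<and> card J2 \<le> qstar
      \<and> h1 \<in> sumsp (Hsp M X q) J1 \<and> h2 \<in> sumsp (Hsp M X q) J2
      \<and> pnorm M X h1 > 0 \<and> pnorm M X h2 > 0}"
  proof (rule bdd_aboveI, safe)
    fix k1 k2 :: "(nat \<Rightarrow> real) \<Rightarrow> real" and K1 K2 :: "nat set"
    assume K: "K1 \<subseteq> {1..q}" "K2 \<subseteq> {1..q}" "k1 \<in> sumsp (Hsp M X q) K1"
      "k2 \<in> sumsp (Hsp M X q) K2" "pnorm M X k1 > 0" "pnorm M X k2 > 0"
    have "L2f M X k1" "L2f M X k2"
      using K(1-4) by (blast intro: L2f_sumsp_Hsp Xmeas)+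
    then have "pinner M X k1 k2 \<le> pnorm M X k1 * pnorm M X k2" by (rule pinner_le_pnorm)
    then show "pinner M X k1 k2 / (pnorm M X k1 * pnorm M X k2) \<le> 1"
      using K(5,6) by (simp add: divide_le_eq)
  qed
qed

lemma rho_gap:
  assumes Xmeas: "\<And>j. j \<in> {1..q} \<Longrightarrow> X j \<in> borel_measurable M"
    and J12: "J1 \<subseteq> {1..q}" "J2 \<subseteq> {1..q}" "J1 \<inter> J2 = {}" "card J1 \<le> qstar" "card J2 \<le> qstar"
    and h: "h1 \<in> sumsp (Hsp M X q) J1" "h2 \<in> sumsp (Hsp M X q) J2"
  shows "(1 - (rho M X q qstar)\<^sup>2) * (pnorm M X h1)\<^sup>2 \<le> (pnorm M X (\<lambda>x. h1 x - h2 x))\<^sup>2"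
proof (rule correlation_gap)
  show "L2f M X h1" "L2f M X h2"
    using J12 h by (blast intro: L2f_sumsp_Hsp Xmeas)+
  show "pinner M X h1 h2 / (pnorm M X h1 * pnorm M X h2) \<le> rho M X q qstar"
    if "pnorm M X h1 > 0" "pnorm M X h2 > 0"
    by (rule correlation_le_rho[OF Xmeas J12 h that])
qed

lemma projection_gap:
  assumes "\<And>j. j \<in> J0 \<Longrightarrow> fin_dim_subspace (V j)" "\<And>j. j \<in> J \<Longrightarrow> fin_dim_subspace (V j)"
    and "u \<in> sumsp V J0"
  shows "emp_norm2_vec (PiJ V xs J0 (evalv xs u)) - emp_norm2_vec (PiJ V xs J (evalv xs u))
    = emp_norm2_vec (evalv xs u - PiJ V xs J (evalv xs u))"
proof -
  have "PiJ V xs J0 (evalv xs u) = evalv xs u"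
    unfolding PiJ_def using assms(3) by (intro orth_proj_id subspace_evalv_sumsp assms(1)) simp_all
  then show ?thesis
    using orth_proj_pythagoras[OF subspace_evalv_sumsp[OF assms(2), where xs = xs], where u = "evalv xs u"]
    unfolding emp_norm2_vec_def PiJ_def by (simp add: diff_divide_distrib)
qed

text \<open>Elementary transfer of the population bound to empirical norms: with
  a = ||h1||^2, b = ||d||^2 and A, B their empirical counterparts.\<close>
lemma empirical_transfer:
  fixes a b A B \<delta> r :: real
  assumes "0 < \<delta>" "\<delta> < 1" "0 \<le> A" "0 \<le> B"
    and "A \<le> (1 + \<delta>) * a" "(1 - r) * a \<le> b" "(1 - \<delta>) * b \<le> B"
  shows "(1 - \<delta>) / (1 + \<delta>) * (1 - r) * A \<le> B"
proof (cases "r \<le> 1")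
  case True
  have "(1 - r) * (A / (1 + \<delta>)) \<le> (1 - r) * a"
    using assms(1,5) True by (intro mult_left_mono) (simp_all add: divide_le_eq mult.commute)
  also have "\<dots> \<le> b" by (rule assms(6))
  finally have "(1 - \<delta>) * ((1 - r) * (A / (1 + \<delta>))) \<le> (1 - \<delta>) * b"
    using assms(2) by (intro mult_left_mono) simp_all
  then show ?thesis using assms(7) by (simp add: algebra_simps)
next
  case False
  then have "(1 - \<delta>) / (1 + \<delta>) * (1 - r) * A \<le> 0"
    using assms(1-3) by (intro mult_nonpos_nonneg mult_nonneg_nonpos) simp_all
  then show ?thesis using assms(4) by linarith
qed

lemma residual_lower_bound:
  assumes Xmeas: "\<And>j. j \<in> {1..q} \<Longrightarrow> X j \<in> borel_measurable M"
    and V_sub: "\<And>j. j \<in> {1..q} \<Longrightarrow> V j \<subseteq> Hsp M X q j"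
    and V_fd: "\<And>j. j \<in> {1..q} \<Longrightarrow> fin_dim_subspace (V j)"
    and J: "J \<subseteq> {1..q}" "card J \<le> qstar" and J0: "J0 \<subseteq> {1..q}" "card J0 \<le> qstar"
    and vv: "\<And>j. j \<in> J0 \<Longrightarrow> vv j \<in> V j"
    and \<delta>: "0 < \<delta>" "\<delta> < 1"
    and event: "event_E M X V xs \<delta> (J \<union> J0)"
  shows "emp_norm2_vec (evalv xs (\<lambda>x. \<Sum>j\<in>J0. vv j x) - PiJ V xs J (evalv xs (\<lambda>x. \<Sum>j\<in>J0. vv j x)))
      \<ge> (1 - \<delta>) / (1 + \<delta>) * (1 - (rho M X q qstar)\<^sup>2) * emp_norm2 xs (\<lambda>x. \<Sum>j\<in>J0 - J. vv j x)"
proof -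
  define v where "v = evalv xs (\<lambda>x. \<Sum>j\<in>J0. vv j x)"
  define h1 where "h1 = (\<lambda>x. \<Sum>j\<in>J0 - J. vv j x)"
  have fin: "finite J" "finite J0" "finite (J \<union> J0)" using J J0 finite_subset by auto
  have fdL: "\<And>j. j \<in> J \<union> J0 \<Longrightarrow> fin_dim_subspace (V j)" using V_fd J J0 by blast
  have sub: "subspace (evalv xs ` sumsp V J)" by (rule subspace_evalv_sumsp) (use fdL in blast)
  obtain g where g: "g \<in> sumsp V J" "PiJ V xs J v = evalv xs g"
    using orth_proj_props(1)[OF sub] unfolding PiJ_def by blast
  obtain h2 where h2: "h2 \<in> sumsp V J"
      "(\<lambda>x. (\<Sum>j\<in>J0. vv j x) - g x) = (\<lambda>x. h1 x - h2 x)"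
    using sumsp_residual_split[OF fin(1,2) _ vv g(1)] fdL unfolding h1_def by blast
  have residual: "v - PiJ V xs J v = evalv xs (\<lambda>x. h1 x - h2 x)"
    unfolding g(2) unfolding v_def h2(2)[symmetric] by (simp add: evalv_def vec_eq_iff)
  have h1V: "h1 \<in> sumsp V (J0 - J)" unfolding h1_def by (rule sumsp_of_components) (simp add: vv)
  have h1L: "h1 \<in> sumsp V (J \<union> J0)" by (rule sumsp_mono[OF _ fin(3) fdL h1V]) blast
  moreover have "h2 \<in> sumsp V (J \<union> J0)" by (rule sumsp_mono[OF _ fin(3) fdL h2(1)]) blast
  ultimately have dL: "(\<lambda>x. h1 x - h2 x) \<in> sumsp V (J \<union> J0)"
    using sumsp_diff[of "J \<union> J0" V h1 h2] fdL by blast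
  have h1H: "h1 \<in> sumsp (Hsp M X q) (J0 - J)"
    by (rule sumsp_subset[OF _ h1V]) (use J0(1) V_sub in blast)
  have h2H: "h2 \<in> sumsp (Hsp M X q) J"
    by (rule sumsp_subset[OF _ h2(1)]) (use J(1) V_sub in blast)
  have "card (J0 - J) \<le> qstar" using J0(2) card_mono[OF fin(2), of "J0 - J"] by simp
  then have gap: "(1 - (rho M X q qstar)\<^sup>2) * (pnorm M X h1)\<^sup>2 \<le> (pnorm M X (\<lambda>x. h1 x - h2 x))\<^sup>2"
    using rho_gap[OF Xmeas _ J(1) _ _ J(2) h1H h2H] J0(1) by blast
  have "\<forall>g\<in>sumsp V (J \<union> J0). (1 - \<delta>) * (pnorm M X g)\<^sup>2 \<le> emp_norm2 xs g
      \<and> emp_norm2 xs g \<le> (1 + \<delta>) * (pnorm M X g)\<^sup>2"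
    using event unfolding event_E_def .
  then have "emp_norm2 xs h1 \<le> (1 + \<delta>) * (pnorm M X h1)\<^sup>2"
      "(1 - \<delta>) * (pnorm M X (\<lambda>x. h1 x - h2 x))\<^sup>2 \<le> emp_norm2 xs (\<lambda>x. h1 x - h2 x)"
    using h1L dL by blast+
  with \<delta> gap have "(1 - \<delta>) / (1 + \<delta>) * (1 - (rho M X q qstar)\<^sup>2) * emp_norm2 xs h1
      \<le> emp_norm2 xs (\<lambda>x. h1 x - h2 x)"
    by (intro empirical_transfer emp_norm2_nonneg)
  then show ?thesis unfolding v_def[symmetric] residual emp_norm2_vec_evalv h1_def[symmetric] .
qed

theorem proposition5:
  fixes M :: "'a measure" and X :: "nat \<Rightarrow> 'a \<Rightarrow> real" and q qstar :: nat
    and f :: "nat \<Rightarrow> real \<Rightarrow> real" and J0 :: "nat set"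
    and V :: "nat \<Rightarrow> ((nat \<Rightarrow> real) \<Rightarrow> real) set"
    and xs :: "'n::finite \<Rightarrow> (nat \<Rightarrow> real)"
    and \<delta> :: real and J :: "nat set" and vv :: "nat \<Rightarrow> (nat \<Rightarrow> real) \<Rightarrow> real"
  assumes P: "prob_space M"
    and q: "q \<ge> 1"
    and Xmeas: "\<And>j. j \<in> {1..q} \<Longrightarrow> X j \<in> borel_measurable M"
    and f_meas: "\<And>j. j \<in> {1..q} \<Longrightarrow> f j \<in> borel_measurable borel"
    and f_L2: "\<And>j. j \<in> {1..q} \<Longrightarrow> integrable M (\<lambda>\<omega>. (f j (X j \<omega>))\<^sup>2)"
    and f_centered: "\<And>j. j \<in> {1..q} \<Longrightarrow> j < q \<Longrightarrow> (\<integral>\<omega>. f j (X j \<omega>) \<partial>M) = 0"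
    and J0_def: "J0 = {j \<in> {1..q}. pnorm M X (\<lambda>x. f j (x j)) > 0}"
    and s_le: "card J0 \<le> qstar"
    and assumption1: "rho M X q qstar < 1"
    and V_sub: "\<And>j. j \<in> {1..q} \<Longrightarrow> V j \<subseteq> Hsp M X q j"
    and V_fd: "\<And>j. j \<in> {1..q} \<Longrightarrow> fin_dim_subspace (V j)"
    and \<delta>: "0 < \<delta>" "\<delta> < 1"
    and J: "J \<subseteq> {1..q}" "card J \<le> qstar" "J0 - J \<noteq> {}"
    and vv: "\<And>j. j \<in> J0 \<Longrightarrow> vv j \<in> V j"
    and event: "event_E M X V xs \<delta> (J \<union> J0)"
  shows "let v = evalv xs (\<lambda>x. \<Sum>j\<in>J0. vv j x) in
      emp_norm2_vec (PiJ V xs J0 v) - emp_norm2_vec (PiJ V xs J v) = emp_norm2_vec (v - PiJ V xs J v)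
    \<and> emp_norm2_vec (v - PiJ V xs J v)
        \<ge> (1 - \<delta>) / (1 + \<delta>) * (1 - (rho M X q qstar)\<^sup>2) * emp_norm2 xs (\<lambda>x. \<Sum>j\<in>J0 - J. vv j x)"
proof -
  define v where "v = evalv xs (\<lambda>x. \<Sum>j\<in>J0. vv j x)"
  have J0sub: "J0 \<subseteq> {1..q}" using J0_def by auto
  have "(\<lambda>x. \<Sum>j\<in>J0. vv j x) \<in> sumsp V J0" by (rule sumsp_of_components) (rule vv)
  then have "emp_norm2_vec (PiJ V xs J0 v) - emp_norm2_vec (PiJ V xs J v)
      = emp_norm2_vec (v - PiJ V xs J v)"
    unfolding v_def by (rule projection_gap[rotated 2]) (use V_fd J(1) J0sub in blast)+
  moreover have "emp_norm2_vec (v - PiJ V xs J v)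
      \<ge> (1 - \<delta>) / (1 + \<delta>) * (1 - (rho M X q qstar)\<^sup>2) * emp_norm2 xs (\<lambda>x. \<Sum>j\<in>J0 - J. vv j x)"
    unfolding v_def by (rule residual_lower_bound[OF Xmeas V_sub V_fd J(1,2) J0sub s_le vv \<delta> event])
  ultimately show ?thesis unfolding Let_def v_def[symmetric] by (rule conjI)
qed

end
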